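(* Let $g_1,\dots,g_r\in\mathbb R[X_1,\dots,X_n]$, $S=\mathcal S(\mathbf g)$, and assume the CQC holds at $z\in S$. Then there exist $\epsilon''=\epsilon''(z)>0$ and $\mathfrak c''=\mathfrak c''(z)>0$ such that for all $y\in[-1,1]^n$ with $D(y)=\operatorname{dist}(y,S)=\|y-z\|_2$ and $D(y)\le\epsilon''$, we have $D(y)\le\mathfrak c''\,G(y)$.
   Context: $\mathcal S(\mathbf g)=\{x:g_i(x)\ge0\ \forall i\}$; $G(y)=|\min\{g_1(y),\dots,g_r(y),0\}|$, $D(y)=\operatorname{dist}(y,S)$ (Euclidean) on $[-1,1]^n$. Active constraints at $z$: the $g_i$ with $g_i(z)=0$; CQC at $z$: the gradients of the active constraints at $z$ are linearly independent. *)

theory Defs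
  imports "HOL-Analysis.Analysis"
begin

definition grad :: "(real^'n \<Rightarrow> real) \<Rightarrow> real^'n \<Rightarrow> real^'n" where
  "grad f x = (\<chi> j. frechet_derivative f (at x) (axis j 1))"

definition semialg_set :: "nat \<Rightarrow> (nat \<Rightarrow> real^'n \<Rightarrow> real) \<Rightarrow> (real^'n) set" where
  "semialg_set r g = {x. \<forall>i\<in>{1..r}. g i x \<ge> 0}"

definition Gviol :: "nat \<Rightarrow> (nat \<Rightarrow> real^'n \<Rightarrow> real) \<Rightarrow> real^'n \<Rightarrow> real" where
  "Gviol r g y = \<bar>Min (insert 0 ((\<lambda>i. g i y) ` {1..r}))\<bar>"

definition active :: "nat \<Rightarrow> (nat \<Rightarrow> real^'n \<Rightarrow> real) \<Rightarrow> real^'n \<Rightarrow> nat set" where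
  "active r g z = {i\<in>{1..r}. g i z = 0}"

definition lin_indep_family :: "'i set \<Rightarrow> ('i \<Rightarrow> 'a::real_vector) \<Rightarrow> bool" where
  "lin_indep_family A v \<longleftrightarrow> (\<forall>c. (\<Sum>i\<in>A. c i *\<^sub>R v i) = 0 \<longrightarrow> (\<forall>i\<in>A. c i = 0))"

definition CQC :: "nat \<Rightarrow> (nat \<Rightarrow> real^'n \<Rightarrow> real) \<Rightarrow> real^'n \<Rightarrow> bool" where
  "CQC r g z \<longleftrightarrow> lin_indep_family (active r g z) (\<lambda>i. grad (g i) z)"

end

theory Submission imports Defs begin

text \<open>The CQC yields a direction \<open>d\<close> along which every active constraint increases with slope 1
  at \<open>z\<close>, hence with slope at least 1/2 near \<open>z\<close>, while the inactive constraints stay positive.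
  A point \<open>y\<close> close to \<open>z\<close> violates the constraints by at most \<open>G(y)\<close>, so moving from \<open>y\<close> by
  \<open>2 G(y)\<close> along \<open>d\<close> lands in \<open>S\<close>; this gives \<open>D(y) \<le> 2 \<parallel>d\<parallel> G(y)\<close>.\<close>

lemma real_polynomial_function_has_polynomial_derivative:
  fixes f :: "'a::real_normed_vector \<Rightarrow> real"
  assumes "real_polynomial_function f"
  shows "\<exists>D. (\<forall>x. (f has_derivative D x) (at x)) \<and> (\<forall>h. real_polynomial_function (\<lambda>x. D x h))"
  using assms
proof (induction f rule: real_polynomial_function.induct)
  case (linear f)
  then show ?case
    by (intro exI[of _ "\<lambda>x. f"]) (auto intro: bounded_linear_imp_has_derivative)
next
  case (const c)
  then show ?case by (intro exI[of _ "\<lambda>x h. 0"]) auto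
next
  case (add f g)
  then obtain Df Dg
    where "\<forall>x. (f has_derivative Df x) (at x)" "\<forall>h. real_polynomial_function (\<lambda>x. Df x h)"
      and "\<forall>x. (g has_derivative Dg x) (at x)" "\<forall>h. real_polynomial_function (\<lambda>x. Dg x h)"
    by blast
  then show ?case
    by (intro exI[of _ "\<lambda>x h. Df x h + Dg x h"]) (auto intro!: has_derivative_add)
next
  case (mult f g)
  then obtain Df Dg
    where "\<forall>x. (f has_derivative Df x) (at x)" "\<forall>h. real_polynomial_function (\<lambda>x. Df x h)"
      and "\<forall>x. (g has_derivative Dg x) (at x)" "\<forall>h. real_polynomial_function (\<lambda>x. Dg x h)"
    by blast
  with mult.hyps show ?case
    by (intro exI[of _ "\<lambda>x h. f x * Dg x h + Df x h * g x"])
      (auto intro!: has_derivative_mult real_polynomial_function.intros(3,4))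
qed

lemma grad_inner:
  assumes "(f has_derivative D) (at x)"
  shows "grad f x \<bullet> d = D d"
proof -
  have lin: "linear D" using assms by (rule has_derivative_linear)
  have "D d = D (\<Sum>j\<in>UNIV. (d $ j) *\<^sub>R axis j 1)"
    using basis_expansion[of d] by (simp add: scalar_mult_eq_scaleR)
  also have "\<dots> = (\<Sum>j\<in>UNIV. (d $ j) * D (axis j 1))"
    using lin by (simp add: linear_sum linear_scale)
  also have "\<dots> = grad f x \<bullet> d"
    unfolding grad_def frechet_derivative_at[OF assms, symmetric]
    by (simp add: inner_vec_def mult.commute)
  finally show ?thesis by simp
qed

lemma lin_indep_family_imp_independent:
  assumes "finite A" "lin_indep_family A v"
  shows "inj_on v A" "independent (v ` A)"
proof -
  show inj: "inj_on v A"
  proof (rule inj_onI, rule ccontr)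
    fix i j assume ij: "i \<in> A" "j \<in> A" "v i = v j" "i \<noteq> j"
    define c where "c = (\<lambda>k. if k = i then 1 else if k = j then -1 else (0::real))"
    have "(\<Sum>k\<in>A. c k *\<^sub>R v k) = (\<Sum>k\<in>{i, j}. c k *\<^sub>R v k)"
      by (rule sum.mono_neutral_right) (use assms(1) ij in \<open>auto simp: c_def\<close>)
    also have "\<dots> = c i *\<^sub>R v i + c j *\<^sub>R v j"
      using ij by simp
    also have "\<dots> = 0" using ij by (simp add: c_def)
    finally show False
      using assms(2) ij unfolding lin_indep_family_def c_def by fastforce
  qed
  show "independent (v ` A)"
  proof
    assume "dependent (v ` A)"
    then obtain u where u: "\<exists>w\<in>v ` A. u w \<noteq> 0" "(\<Sum>w\<in>v ` A. u w *\<^sub>R w) = 0"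
      using assms(1) by (auto simp: dependent_finite)
    have "(\<Sum>i\<in>A. u (v i) *\<^sub>R v i) = 0"
      using u(2) by (simp add: sum.reindex[OF inj])
    moreover have "(\<Sum>i\<in>A. u (v i) *\<^sub>R v i) = 0 \<longrightarrow> (\<forall>i\<in>A. u (v i) = 0)"
      using assms(2) unfolding lin_indep_family_def by (rule spec)
    ultimately have "\<forall>i\<in>A. u (v i) = 0" by blast
    with u(1) show False by blast
  qed
qed

lemma lin_indep_family_imp_inner_eq_one:
  fixes v :: "'i \<Rightarrow> 'a::euclidean_space"
  assumes "finite A" "lin_indep_family A v"
  shows "\<exists>d. \<forall>i\<in>A. v i \<bullet> d = 1"
proof -
  obtain \<phi> :: "'a \<Rightarrow> real" where \<phi>: "linear \<phi>" "\<forall>w\<in>v ` A. \<phi> w = 1"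
    using linear_independent_extend[OF lin_indep_family_imp_independent(2)[OF assms], of "\<lambda>_. 1"]
    by auto
  define d where "d = (\<Sum>b\<in>Basis. \<phi> b *\<^sub>R b)"
  have inner_d: "w \<bullet> d = \<phi> w" for w
  proof -
    have "w \<bullet> d = (\<Sum>b\<in>Basis. (w \<bullet> b) * \<phi> b)"
      unfolding d_def inner_sum_right by (simp add: mult.commute)
    also have "\<dots> = \<phi> w"
      using Linear_Algebra.linear_componentwise[OF \<phi>(1), of w 1]
      by (simp only: inner_real_def mult_1_right)
    finally show ?thesis .
  qed
  show ?thesis
    using \<phi>(2) by (intro exI[of _ d]) (simp add: inner_d)
qed

lemma has_derivative_line_increment_ge:
  fixes f :: "'a::real_normed_vector \<Rightarrow> real"
  assumes deriv: "\<And>x. (f has_derivative Df x) (at x)"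
    and slope: "\<And>s. 0 \<le> s \<Longrightarrow> s \<le> t \<Longrightarrow> a \<le> Df (y + s *\<^sub>R d) d"
    and "0 \<le> t"
  shows "f y + a * t \<le> f (y + t *\<^sub>R d)"
proof -
  have line: "((\<lambda>s. f (y + s *\<^sub>R d) - a * s) has_real_derivative Df (y + s *\<^sub>R d) d - a) (at s)"
    for s
  proof -
    have "((\<lambda>s. f (y + s *\<^sub>R d)) has_derivative (\<lambda>h. Df (y + s *\<^sub>R d) (h *\<^sub>R d))) (at s)"
      by (rule has_derivative_compose[OF _ deriv]) (auto intro!: derivative_eq_intros)
    moreover have "Df (y + s *\<^sub>R d) (h *\<^sub>R d) = h * Df (y + s *\<^sub>R d) d" for h
      using has_derivative_linear[OF deriv] by (simp add: linear_scale)
    ultimately have "((\<lambda>s. f (y + s *\<^sub>R d)) has_real_derivative Df (y + s *\<^sub>R d) d) (at s)"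
      by (intro has_derivative_imp_has_field_derivative) auto
    then show ?thesis by (auto intro!: derivative_eq_intros)
  qed
  have "f (y + 0 *\<^sub>R d) - a * 0 \<le> f (y + t *\<^sub>R d) - a * t"
    by (rule deriv_nonneg_imp_mono[OF line]) (use slope \<open>0 \<le> t\<close> in auto)
  then show ?thesis by simp
qed

lemma neg_Gviol_le:
  assumes "i \<in> {1..r}"
  shows "- Gviol r g y \<le> g i y"
proof -
  have "Min (insert 0 ((\<lambda>i. g i y) ` {1..r})) \<le> g i y"
    using assms by (intro Min_le) auto
  moreover have "Min (insert 0 ((\<lambda>i. g i y) ` {1..r})) \<le> 0"
    by (intro Min_le) auto
  ultimately
  show ?thesis unfolding Gviol_def by linarith
qed

lemma Gviol_le:
  assumes "0 \<le> k" "\<And>i. i \<in> {1..r} \<Longrightarrow> - k \<le> g i y"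
  shows "Gviol r g y \<le> k"
proof -
  have "- k \<le> Min (insert 0 ((\<lambda>i. g i y) ` {1..r}))"
    "Min (insert 0 ((\<lambda>i. g i y) ` {1..r})) \<le> 0"
    using assms by (auto intro!: Min.boundedI)
  then show ?thesis unfolding Gviol_def by linarith
qed

lemma Gviol_nonneg: "0 \<le> Gviol r g y"
  unfolding Gviol_def by (rule abs_ge_zero)

lemma infdist_semialg_set_le_Gviol:
  fixes g :: "nat \<Rightarrow> real^'n \<Rightarrow> real"
  assumes deriv: "\<And>i x. i \<in> {1..r} \<Longrightarrow> (g i has_derivative Dg i x) (at x)"
    and slope: "\<And>i s. i \<in> A \<Longrightarrow> 0 \<le> s \<Longrightarrow> s \<le> 2 * Gviol r g y \<Longrightarrow> 1/2 \<le> Dg i (y + s *\<^sub>R d) d"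
    and rest: "\<And>i. i \<in> {1..r} - A \<Longrightarrow> 0 \<le> g i (y + (2 * Gviol r g y) *\<^sub>R d)"
  shows "infdist y (semialg_set r g) \<le> 2 * norm d * Gviol r g y"
proof -
  define w where "w = y + (2 * Gviol r g y) *\<^sub>R d"
  have "w \<in> semialg_set r g"
    unfolding semialg_set_def
  proof (intro CollectI ballI)
    fix i assume i: "i \<in> {1..r}"
    show "0 \<le> g i w"
    proof (cases "i \<in> A")
      case True
      have "g i y + 1/2 * (2 * Gviol r g y) \<le> g i w"
        unfolding w_def by (rule has_derivative_line_increment_ge[OF deriv[OF i]])
          (use slope[OF True] Gviol_nonneg in auto)
      with neg_Gviol_le[OF i, of g y] show ?thesis by simp
    qed (use rest i in \<open>auto simp: w_def\<close>)
  qed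
  then have "infdist y (semialg_set r g) \<le> dist y w"
    by (rule infdist_le)
  also have "\<dots> = 2 * norm d * Gviol r g y"
    using Gviol_nonneg[of r g y] by (simp add: w_def dist_norm)
  finally show ?thesis .
qed

lemma eventually_gt_nhds_isCont:
  fixes f :: "'a::t2_space \<Rightarrow> real"
  assumes "isCont f z" "a < f z"
  shows "eventually (\<lambda>x. a < f x) (nhds z)"
  using assms by (auto simp: isCont_def tendsto_at_iff_tendsto_nhds intro: order_tendstoD)

lemma eventually_constraint_qualification_nhds:
  fixes g :: "nat \<Rightarrow> real^'n \<Rightarrow> real" and Dg :: "nat \<Rightarrow> real^'n \<Rightarrow> real^'n \<Rightarrow> real"
  assumes cont: "\<And>i. i \<in> {1..r} \<Longrightarrow> isCont (g i) z"
    and cont_slope: "\<And>i. i \<in> active r g z \<Longrightarrow> isCont (\<lambda>x. Dg i x d) z"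
    and zS: "z \<in> semialg_set r g"
    and slope: "\<And>i. i \<in> active r g z \<Longrightarrow> 1 \<le> Dg i z d"
  shows "eventually (\<lambda>x. (\<forall>i\<in>active r g z. 1/2 < Dg i x d) \<and>
                         (\<forall>i\<in>{1..r} - active r g z. 0 < g i x)) (nhds z)"
proof (intro eventually_conj eventually_ball_finite ballI)
  show "finite (active r g z)" "finite ({1..r} - active r g z)"
    unfolding active_def by auto
  show "eventually (\<lambda>x. 1/2 < Dg i x d) (nhds z)" if "i \<in> active r g z" for i
    using cont_slope slope[of i] that by (intro eventually_gt_nhds_isCont) auto
  show "eventually (\<lambda>x. 0 < g i x) (nhds z)" if "i \<in> {1..r} - active r g z" for i
    using that zS cont unfolding active_def semialg_set_def
    by (intro eventually_gt_nhds_isCont) (auto simp: less_le)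
qed

lemma eventually_Gviol_le_nhds:
  assumes cont: "\<And>i. i \<in> {1..r} \<Longrightarrow> isCont (g i) z"
    and zS: "z \<in> semialg_set r g"
    and "0 < k"
  shows "eventually (\<lambda>x. Gviol r g x \<le> k) (nhds z)"
proof -
  have "eventually (\<lambda>x. \<forall>i\<in>{1..r}. - k < g i x) (nhds z)"
  proof (intro eventually_ball_finite ballI)
    show "eventually (\<lambda>x. - k < g i x) (nhds z)" if "i \<in> {1..r}" for i
      using cont[OF that] zS that \<open>0 < k\<close> unfolding semialg_set_def
      by (intro eventually_gt_nhds_isCont) force+
  qed simp
  then show ?thesis
  proof (rule eventually_mono)
    show "Gviol r g x \<le> k" if "\<forall>i\<in>{1..r}. - k < g i x" for x
      using that \<open>0 < k\<close> by (intro Gviol_le) (auto simp: less_imp_le)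
  qed
qed

lemma semialg_set_local_error_bound:
  fixes g :: "nat \<Rightarrow> real^'n \<Rightarrow> real"
  assumes deriv: "\<And>i x. i \<in> {1..r} \<Longrightarrow> (g i has_derivative Dg i x) (at x)"
    and cont_slope: "\<And>i. i \<in> active r g z \<Longrightarrow> isCont (\<lambda>x. Dg i x d) z"
    and zS: "z \<in> semialg_set r g"
    and slope: "\<And>i. i \<in> active r g z \<Longrightarrow> 1 \<le> Dg i z d"
  shows "\<exists>\<epsilon>>0. \<exists>c>0. \<forall>y. dist y z \<le> \<epsilon> \<longrightarrow> infdist y (semialg_set r g) \<le> c * Gviol r g y"
proof -
  define A where "A = active r g z"
  have cont: "isCont (g i) z" if "i \<in> {1..r}" for i
    using deriv[OF that] by (rule has_derivative_continuous)
  obtain \<delta> where \<delta>: "\<delta> > 0"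
    and near_z: "\<And>x. dist x z < \<delta> \<Longrightarrow> (\<forall>i\<in>A. 1/2 < Dg i x d) \<and> (\<forall>i\<in>{1..r} - A. 0 < g i x)"
    using eventually_constraint_qualification_nhds[where g = g and Dg = Dg,
        OF cont cont_slope zS slope]
    unfolding A_def eventually_nhds_metric by blast
  have nd: "0 < norm d + 1" by (simp add: add_nonneg_pos)
  define \<kappa> where "\<kappa> = \<delta> / (4 * (norm d + 1))"
  have \<kappa>: "\<kappa> > 0" unfolding \<kappa>_def using \<delta> nd by simp
  obtain \<eta> where \<eta>: "\<eta> > 0" and small_G: "\<And>x. dist x z < \<eta> \<Longrightarrow> Gviol r g x \<le> \<kappa>"
    using eventually_Gviol_le_nhds[where g = g, OF cont zS \<kappa>]
    unfolding eventually_nhds_metric by blast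
  define \<epsilon> where "\<epsilon> = min \<eta> \<delta> / 2"
  have "infdist y (semialg_set r g) \<le> (2 * norm d + 1) * Gviol r g y" if y: "dist y z \<le> \<epsilon>" for y
  proof -
    define t where "t = 2 * Gviol r g y"
    have t: "0 \<le> t" "t \<le> 2 * \<kappa>"
      using small_G[of y] Gviol_nonneg[of r g y] y \<eta> \<delta> unfolding t_def \<epsilon>_def by auto
    have segment_near: "dist (y + s *\<^sub>R d) z < \<delta>" if "0 \<le> s" "s \<le> t" for s
    proof -
      have "dist (y + s *\<^sub>R d) z \<le> dist y z + s * norm d"
        using dist_triangle[of "y + s *\<^sub>R d" z y] that by (simp add: dist_norm)
      also have "s * norm d \<le> 2 * \<kappa> * norm d"
        using that t by (intro mult_right_mono) auto
      also have "2 * \<kappa> * norm d = \<delta> / 2 * (norm d / (norm d + 1))"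
        unfolding \<kappa>_def using nd by (simp add: divide_simps)
      also have "\<dots> < \<delta> / 2 * 1"
        using \<delta> nd by (intro mult_strict_left_mono) (auto simp: divide_less_eq_1)
      finally show ?thesis using y unfolding \<epsilon>_def by linarith
    qed
    have "infdist y (semialg_set r g) \<le> 2 * norm d * Gviol r g y"
    proof (rule infdist_semialg_set_le_Gviol[OF deriv])
      show "1/2 \<le> Dg i (y + s *\<^sub>R d) d" if "i \<in> A" "0 \<le> s" "s \<le> 2 * Gviol r g y" for i s
        using near_z[OF segment_near] that unfolding t_def by (auto simp: less_imp_le)
      show "0 \<le> g i (y + (2 * Gviol r g y) *\<^sub>R d)" if "i \<in> {1..r} - A" for i
        using near_z[OF segment_near[OF t(1) order_refl]] that unfolding t_def
        by (auto simp: less_imp_le)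
    qed
    also have "\<dots> \<le> (2 * norm d + 1) * Gviol r g y"
      using Gviol_nonneg[of r g y] by (simp add: distrib_right)
    finally show ?thesis .
  qed
  moreover have "\<epsilon> > 0" "2 * norm d + 1 > 0"
    using \<eta> \<delta> unfolding \<epsilon>_def by (auto simp: add_nonneg_pos)
  ultimately show ?thesis by blast
qed

theorem mainTheorem12:
  fixes r :: nat and g :: "nat \<Rightarrow> real^'n \<Rightarrow> real" and z :: "real^'n"
  assumes poly: "\<forall>i\<in>{1..r}. real_polynomial_function (g i)"
    and zS: "z \<in> semialg_set r g"
    and cqc: "CQC r g z"
  shows "\<exists>\<epsilon>>0. \<exists>c>0. \<forall>y::real^'n. (\<forall>j. \<bar>y $ j\<bar> \<le> 1) \<longrightarrow>
           infdist y (semialg_set r g) = dist y z \<longrightarrow>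
           infdist y (semialg_set r g) \<le> \<epsilon> \<longrightarrow>
           infdist y (semialg_set r g) \<le> c * Gviol r g y"
proof -
  have "finite (active r g z)" unfolding active_def by auto
  then obtain d where d: "\<And>i. i \<in> active r g z \<Longrightarrow> grad (g i) z \<bullet> d = 1"
    using lin_indep_family_imp_inner_eq_one cqc unfolding CQC_def by blast
  have "\<forall>i\<in>{1..r}. \<exists>D. (\<forall>x. (g i has_derivative D x) (at x)) \<and>
      (\<forall>h. real_polynomial_function (\<lambda>x. D x h))"
    using poly real_polynomial_function_has_polynomial_derivative by blast
  then obtain Dg where Dg: "\<And>i x. i \<in> {1..r} \<Longrightarrow> (g i has_derivative Dg i x) (at x)"
    and Dg_poly: "\<And>i h. i \<in> {1..r} \<Longrightarrow> real_polynomial_function (\<lambda>x. Dg i x h)"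
    by metis
  have "\<exists>\<epsilon>>0. \<exists>c>0. \<forall>y. dist y z \<le> \<epsilon> \<longrightarrow> infdist y (semialg_set r g) \<le> c * Gviol r g y"
  proof (rule semialg_set_local_error_bound[OF Dg _ zS])
    fix i assume i: "i \<in> active r g z"
    then have "i \<in> {1..r}" unfolding active_def by simp
    then show "isCont (\<lambda>x. Dg i x d) z" "1 \<le> Dg i z d"
      using Dg_poly continuous_real_polymonial_function d[OF i] grad_inner[OF Dg] by auto
  qed
  \<comment> \<open>The bound holds on a whole ball around \<open>z\<close>; the cube and nearest-point hypotheses
    only serve to place \<open>y\<close> in that ball.\<close>
  then show ?thesis by (metis order.refl)
qed

end
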